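(* For an integer $z\ge1$ let $$\varphi_z(v)=\frac{1-\frac{4q^2-h^z}{2q(1-2q)}(e^v-1)}{1-\frac{2q-h^z}{1-2q}(e^v-1)},\qquad \psi_z(v)=\frac{e^v}{1-\frac{2q-h^z}{1-2q}(e^v-1)},$$ and $m_z=h^z/(2q)$. For $\log(1-2q(1-2q))<v<\log(1+2q(1-2q))$ we have $$\varphi_z(v)=\exp\big(m_z(v+O(v^2))\big),\qquad v\to0,$$ where the $O(v^2)$ term is uniform in $z\ge1$, and $$\psi_z(v)\le\frac{1+|e^v-1|}{1-\frac{|e^v-1|}{1-2q}}.$$
   Context: Let $0<q<p<1$ with $p+q=1$ and $h=q/p$. *)

theory Defs
  imports Complex_Main
begin

definition hh :: "real \<Rightarrow> real \<Rightarrow> real" where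
  "hh p q = q / p"

definition phi :: "real \<Rightarrow> real \<Rightarrow> nat \<Rightarrow> real \<Rightarrow> real" where
  "phi p q z v =
     (1 - (4 * q^2 - hh p q ^ z) / (2 * q * (1 - 2 * q)) * (exp v - 1)) /
     (1 - (2 * q - hh p q ^ z) / (1 - 2 * q) * (exp v - 1))"

definition psi :: "real \<Rightarrow> real \<Rightarrow> nat \<Rightarrow> real \<Rightarrow> real" where
  "psi p q z v = exp v / (1 - (2 * q - hh p q ^ z) / (1 - 2 * q) * (exp v - 1))"

definition mz :: "real \<Rightarrow> real \<Rightarrow> nat \<Rightarrow> real" where
  "mz p q z = hh p q ^ z / (2 * q)"

end

theory Submission
  imports Defs
begin

text \<open>Writing \<open>x = e\<^sup>v - 1\<close> and \<open>b\<^sub>z = (2q - h\<^sup>z)/(1 - 2q)\<close>, one has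
  \<open>\<phi>\<^sub>z(v) = 1 + m\<^sub>z x/(1 - b\<^sub>z x)\<close> and \<open>\<psi>\<^sub>z(v) = (1 + x)/(1 - b\<^sub>z x)\<close>.
  Since \<open>0 < h\<^sup>z \<le> h < 2q\<close>, the parameters \<open>m\<^sub>z\<close> and \<open>b\<^sub>z\<close> stay in a compact range
  independent of \<open>z\<close>, so the Taylor estimates
  \<open>ln (1 + u) = u + O(u\<^sup>2)\<close> and \<open>e\<^sup>v - 1 = O(v)\<close> give
  \<open>ln \<phi>\<^sub>z(v) / m\<^sub>z = v + O(v\<^sup>2)\<close> uniformly in \<open>z\<close>; the bound on \<open>\<psi>\<^sub>z\<close> only uses
  \<open>0 \<le> b\<^sub>z \<le> 1/(1 - 2q)\<close>.\<close>

definition bz :: "real \<Rightarrow> real \<Rightarrow> nat \<Rightarrow> real" where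
  "bz p q z = (2 * q - hh p q ^ z) / (1 - 2 * q)"

lemma abs_exp_minus_one_le:
  fixes v :: real assumes "\<bar>v\<bar> \<le> 1/2"
  shows "\<bar>exp v - 1\<bar> \<le> 2 * \<bar>v\<bar>"
proof (cases "0 \<le> v")
  case True
  then have "exp v \<le> 1 + 2*v" using real_exp_bound_lemma assms by auto
  moreover have "1 \<le> exp v" using True by simp
  ultimately show ?thesis using True by auto
next
  case False
  have "1 + v \<le> exp v" by (rule exp_ge_add_one_self)
  moreover have "exp v \<le> 1" using False by simp
  ultimately show ?thesis using False by linarith
qed

lemma abs_exp_minus_one_less:
  fixes s v :: real
  assumes "0 < s" "s < 1" "ln (1 - s) < v" "v < ln (1 + s)"
  shows "\<bar>exp v - 1\<bar> < s"
proof -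
  have "1 - s < exp v" using assms exp_less_cancel_iff[of "ln (1 - s)" v] by simp
  moreover have "exp v < 1 + s" using assms exp_less_cancel_iff[of v "ln (1 + s)"] by simp
  ultimately show ?thesis by linarith
qed

lemma abs_ln_one_plus_ratio_minus_ln_le:
  fixes m M b B x :: real
  assumes m: "0 < m" "m \<le> M" and b: "0 \<le> b" "b \<le> B"
    and x: "\<bar>x\<bar> \<le> 1/2" "\<bar>b*x\<bar> \<le> 1/2" "m*\<bar>x\<bar> \<le> 1/4"
  shows "\<bar>ln (1 + m*x/(1 - b*x))/m - ln (1 + x)\<bar> \<le> (8*M + 2*B + 2) * x^2"
proof -
  define d where "d = 1 - b*x"
  have d: "d \<ge> 1/2" using x(2) unfolding d_def by auto
  define u where "u = m*x/d"
  have "\<bar>u\<bar> = m*\<bar>x\<bar>/d" using m d unfolding u_def by (simp add: abs_mult)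
  also have "\<dots> \<le> m*\<bar>x\<bar>/(1/2)" using d m by (intro divide_left_mono) auto
  finally have u: "\<bar>u\<bar> \<le> 2*m*\<bar>x\<bar>" by simp
  then have "\<bar>ln (1 + u) - u\<bar> \<le> 2*u^2"
    using x(3) by (intro abs_ln_one_plus_x_minus_x_bound) simp
  also have "\<dots> \<le> 2*(2*m*\<bar>x\<bar>)^2"
    using power_mono[OF u abs_ge_zero, of 2] by simp
  finally have "\<bar>(ln (1 + u) - u)/m\<bar> \<le> 8*m*x^2" using m
    by (simp add: divide_le_eq power2_eq_square mult_ac)
  also have "\<dots> \<le> 8*M*x^2" using m by (simp add: mult_right_mono)
  finally have ln_u: "\<bar>(ln (1 + u) - u)/m\<bar> \<le> 8*M*x^2" .
  have "u/m - x = b*x^2/d" unfolding u_def d_def using m d unfolding d_def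
    by (simp add: field_simps power2_eq_square)
  then have "\<bar>u/m - x\<bar> = b*x^2/d" using b d by simp
  also have "\<dots> \<le> b*x^2/(1/2)" using b d by (intro divide_left_mono) auto
  also have "\<dots> \<le> 2*B*x^2" using b by (simp add: mult_right_mono)
  finally have ratio_x: "\<bar>u/m - x\<bar> \<le> 2*B*x^2" .
  have ln_x: "\<bar>ln (1 + x) - x\<bar> \<le> 2*x^2" by (rule abs_ln_one_plus_x_minus_x_bound[OF x(1)])
  have "ln (1 + u)/m - ln (1 + x) = (ln (1 + u) - u)/m + (u/m - x) - (ln (1 + x) - x)"
    using m by (simp add: field_simps)
  then have "\<bar>ln (1 + u)/m - ln (1 + x)\<bar> \<le> 8*M*x^2 + 2*B*x^2 + 2*x^2"
    using ln_u ratio_x ln_x by linarith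
  then show ?thesis unfolding u_def d_def by (simp add: algebra_simps)
qed

lemma one_plus_ratio_exp_form:
  fixes m M b B v :: real
  defines "x \<equiv> exp v - 1"
  assumes m: "0 < m" "m \<le> M" and b: "0 \<le> b" "b \<le> B"
    and v: "\<bar>v\<bar> \<le> min (1/4) (min (1/(4*(B+1))) (1/(8*(M+1))))"
  shows "\<exists>r. \<bar>r\<bar> \<le> 4*(8*M + 2*B + 2) * v^2 \<and> 1 + m*x/(1 - b*x) = exp (m*(v + r))"
proof -
  have x: "\<bar>x\<bar> \<le> 2*\<bar>v\<bar>" unfolding x_def using v by (intro abs_exp_minus_one_le) simp
  have "\<bar>b*x\<bar> \<le> (B+1)*(2*\<bar>v\<bar>)"
    using b x by (simp add: abs_mult) (intro mult_mono; simp)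
  also have "\<dots> \<le> (B+1)*(2*(1/(4*(B+1))))" using b v by (intro mult_left_mono) auto
  also have "\<dots> = 1/2" using b by (simp add: field_simps)
  finally have bx: "\<bar>b*x\<bar> \<le> 1/2" .
  have "m*\<bar>x\<bar> \<le> (M+1)*(2*\<bar>v\<bar>)" using m x by (intro mult_mono) auto
  also have "\<dots> \<le> (M+1)*(2*(1/(8*(M+1))))" using m v by (intro mult_left_mono) auto
  also have "\<dots> = 1/4" using m by (simp add: field_simps)
  finally have mx: "m*\<bar>x\<bar> \<le> 1/4" .
  have d: "1/2 \<le> 1 - b*x" using bx by (simp add: abs_le_iff)
  have "\<bar>m*x/(1 - b*x)\<bar> = m*\<bar>x\<bar>/(1 - b*x)" using m d by (simp add: abs_mult)
  also have "\<dots> \<le> m*\<bar>x\<bar>/(1/2)" using m d by (intro divide_left_mono) auto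
  also have "\<dots> = 2*(m*\<bar>x\<bar>)" by simp
  finally have "\<bar>m*x/(1 - b*x)\<bar> \<le> 1/2" using mx by linarith
  then have pos: "0 < 1 + m*x/(1 - b*x)" using abs_le_iff[of "m*x/(1 - b*x)"] by linarith
  define r where "r = ln (1 + m*x/(1 - b*x))/m - v"
  have "\<bar>r\<bar> \<le> (8*M + 2*B + 2) * x^2"
    unfolding r_def using abs_ln_one_plus_ratio_minus_ln_le[OF m b _ bx mx] x v
    by (simp add: x_def)
  also have "\<dots> \<le> (8*M + 2*B + 2) * (2*\<bar>v\<bar>)^2"
    using m b power_mono[OF x abs_ge_zero, of 2] by (intro mult_left_mono) auto
  finally have "\<bar>r\<bar> \<le> 4*(8*M + 2*B + 2) * v^2" by (simp add: power_mult_distrib algebra_simps)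
  moreover have "exp (m*(v + r)) = 1 + m*x/(1 - b*x)" unfolding r_def using m pos by simp
  ultimately show ?thesis by metis
qed

lemma one_minus_mult_pos:
  fixes b c x :: real
  assumes "0 \<le> b" "b*c \<le> 1" "\<bar>x\<bar> < c"
  shows "0 < 1 - b*x"
proof (cases "b = 0")
  case False
  then have "b*\<bar>x\<bar> < b*c" using assms by (intro mult_strict_left_mono) auto
  moreover have "b*x \<le> b*\<bar>x\<bar>" using assms by (simp add: mult_left_mono)
  ultimately show ?thesis using assms by linarith
qed simp

lemma exp_div_one_minus_mult_le:
  fixes b c v :: real
  defines "x \<equiv> exp v - 1"
  assumes b: "0 \<le> b" "b*c \<le> 1" and x: "\<bar>x\<bar> < c"
  shows "exp v/(1 - b*x) \<le> (1 + \<bar>x\<bar>)/(1 - \<bar>x\<bar>/c)"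
proof -
  have c: "0 < c" using x by linarith
  have "b*x \<le> b*\<bar>x\<bar>" using b by (simp add: mult_left_mono)
  also have "\<dots> \<le> \<bar>x\<bar>/c"
    using mult_right_mono[OF b(2) abs_ge_zero[of x]] c by (simp add: le_divide_eq algebra_simps)
  finally have den: "1 - \<bar>x\<bar>/c \<le> 1 - b*x" by simp
  have pos: "0 < 1 - \<bar>x\<bar>/c" using x c by simp
  have "exp v/(1 - b*x) \<le> (1 + \<bar>x\<bar>)/(1 - b*x)"
    using den pos unfolding x_def by (intro divide_right_mono) auto
  also have "\<dots> \<le> (1 + \<bar>x\<bar>)/(1 - \<bar>x\<bar>/c)"
    using den pos by (intro divide_left_mono) auto
  finally show ?thesis .
qed

lemma phi_eq_one_plus_ratio:
  assumes "q \<noteq> 0" "2*q \<noteq> 1" "1 - bz p q z * (exp v - 1) \<noteq> 0"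
  shows "phi p q z v = 1 + mz p q z * (exp v - 1) / (1 - bz p q z * (exp v - 1))"
proof -
  have "(4 * q^2 - hh p q ^ z) / (2 * q * (1 - 2 * q)) = bz p q z - mz p q z"
    using assms unfolding bz_def mz_def by (simp add: field_simps power2_eq_square)
  then have "phi p q z v = (1 - (bz p q z - mz p q z) * (exp v - 1)) / (1 - bz p q z * (exp v - 1))"
    unfolding phi_def bz_def[symmetric] by simp
  also have "\<dots> = 1 + mz p q z * (exp v - 1) / (1 - bz p q z * (exp v - 1))"
    using assms(3) by (simp add: divide_simps) (simp add: algebra_simps)
  finally show ?thesis .
qed

lemma mz_bz_bounds:
  fixes p q :: real
  assumes "0 < q" "q < p" "p + q = 1" "z \<ge> 1"
  shows "0 < mz p q z" "mz p q z \<le> 1/(2*p)" "0 \<le> bz p q z" "bz p q z \<le> 2*q/(1 - 2*q)"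
    and "bz p q z * (1 - 2*q) \<le> 1"
proof -
  define h where "h = hh p q"
  have h: "0 < h" "h < 1" using assms unfolding h_def hh_def by auto
  have "q*1 < q*(2*p)" using assms by (intro mult_strict_left_mono) auto
  then have h_less: "h < 2*q" using assms unfolding h_def hh_def by (simp add: divide_less_eq mult_ac)
  have hz: "0 < h^z" "h^z \<le> h" using h power_decreasing[of 1 z h] assms(4) by auto
  have q2: "2*q < 1" using assms by simp
  show "0 < mz p q z" using hz assms unfolding mz_def h_def by simp
  have "mz p q z \<le> h/(2*q)" using hz assms unfolding mz_def h_def by (simp add: divide_right_mono)
  also have "h/(2*q) = 1/(2*p)" using assms unfolding h_def hh_def by simp
  finally show "mz p q z \<le> 1/(2*p)" .
  show "0 \<le> bz p q z" using hz h_less q2 unfolding bz_def h_def by simp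
  show "bz p q z \<le> 2*q/(1 - 2*q)" using hz q2 unfolding bz_def h_def by (simp add: divide_right_mono)
  then show "bz p q z * (1 - 2*q) \<le> 1" using q2 by (simp add: le_divide_eq)
qed

theorem lemma7p1:
  fixes p q :: real
  assumes "0 < q" "q < p" "p < 1" "p + q = 1"
  shows "(\<exists>C \<delta>. \<delta> > 0 \<and>
            (\<forall>z::nat. \<forall>v::real. z \<ge> 1 \<longrightarrow>
               ln (1 - 2*q*(1 - 2*q)) < v \<longrightarrow> v < ln (1 + 2*q*(1 - 2*q)) \<longrightarrow>
               \<bar>v\<bar> < \<delta> \<longrightarrow>
               (\<exists>r. \<bar>r\<bar> \<le> C * v^2 \<and> phi p q z v = exp (mz p q z * (v + r)))))
       \<and> (\<forall>z::nat. \<forall>v::real. z \<ge> 1 \<longrightarrow>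
               ln (1 - 2*q*(1 - 2*q)) < v \<longrightarrow> v < ln (1 + 2*q*(1 - 2*q)) \<longrightarrow>
               psi p q z v \<le> (1 + \<bar>exp v - 1\<bar>) / (1 - \<bar>exp v - 1\<bar> / (1 - 2*q)))"
proof -
  have q2: "2*q < 1" using assms by simp
  have s: "0 < 2*q*(1 - 2*q)" "2*q*(1 - 2*q) < 1 - 2*q"
    using assms q2 mult_strict_right_mono[of "2*q" 1 "1 - 2*q"] by auto
  have x_small: "\<bar>exp v - 1\<bar> < 1 - 2*q"
    if "ln (1 - 2*q*(1 - 2*q)) < v" "v < ln (1 + 2*q*(1 - 2*q))" for v
    using abs_exp_minus_one_less[OF s(1) _ that] s assms(1) by linarith
  note bounds = mz_bz_bounds[OF assms(1,2,4)]
  define M where "M = 1/(2*p)"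
  define B where "B = 2*q/(1 - 2*q)"
  define \<delta> where "\<delta> = min (1/4) (min (1/(4*(B+1))) (1/(8*(M+1))))"
  have "0 \<le> M" "0 \<le> B" using assms q2 unfolding M_def B_def by auto
  then have "\<delta> > 0" unfolding \<delta>_def by simp
  moreover have "\<exists>r. \<bar>r\<bar> \<le> 4*(8*M + 2*B + 2) * v^2 \<and> phi p q z v = exp (mz p q z * (v + r))"
    if "z \<ge> 1" "ln (1 - 2*q*(1 - 2*q)) < v" "v < ln (1 + 2*q*(1 - 2*q))" "\<bar>v\<bar> < \<delta>" for z v
  proof -
    have "0 < 1 - bz p q z * (exp v - 1)" by (rule one_minus_mult_pos[OF bounds(3,5) x_small]) (use that in auto)
    then show ?thesis
      using phi_eq_one_plus_ratio[of q p z v] assms q2 that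
        one_plus_ratio_exp_form[OF bounds(1-4)[OF that(1)], of v, folded M_def B_def]
      unfolding \<delta>_def by auto
  qed
  moreover have "psi p q z v \<le> (1 + \<bar>exp v - 1\<bar>) / (1 - \<bar>exp v - 1\<bar> / (1 - 2*q))"
    if "z \<ge> 1" "ln (1 - 2*q*(1 - 2*q)) < v" "v < ln (1 + 2*q*(1 - 2*q))" for z v
    unfolding psi_def bz_def[symmetric]
    using exp_div_one_minus_mult_le[OF bounds(3,5) x_small] that by auto
  ultimately show ?thesis by blast
qed

end
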